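(* Let $t\geq 2$ be an integer and $H=K_{t,t}$. Then there are a positive constant $c$ and an integer $n_0$ such that for every $n>n_0$, $$\mathrm{IR}(H, K_{1,n}) \leq n + c\, n^{1-\frac{1}{2t}}.$$
   Context: All graphs are finite and simple. $K_{t,t}$ is the complete bipartite graph with both parts of size $t$; $K_{1,n}$ is the star with $n$ edges. For graphs $F$, $H$, $G$, write $F \overset{\text{ind}}{\longrightarrow} (H,G)$ if for every coloring of the edges of $F$ with red and blue there is either a red induced copy of $H$ (a vertex set $S\subseteq V(F)$ with $F[S]\cong H$ and all edges of $F[S]$ red) or a blue induced copy of $G$ (defined analogously with blue). The induced Ramsey number $\mathrm{IR}(H,G)$ is the smallest number of vertices of a graph $F$ with $F \overset{\text{ind}}{\longrightarrow} (H,G)$. *)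

theory Defs
  imports Complex_Main
begin

type_synonym 'a graph = "'a set \<times> ('a \<Rightarrow> 'a \<Rightarrow> bool)"

definition simple_graph :: "'a graph \<Rightarrow> bool" where
  "simple_graph G \<longleftrightarrow> finite (fst G) \<and>
     (\<forall>u v. snd G u v \<longrightarrow> u \<in> fst G \<and> v \<in> fst G) \<and>
     (\<forall>u v. snd G u v \<longrightarrow> snd G v u) \<and> (\<forall>u. \<not> snd G u u)"

definition Kbip :: "nat \<Rightarrow> nat \<Rightarrow> nat graph" where
  "Kbip a b = ({0..<a+b}, \<lambda>u v. (u < a \<and> a \<le> v \<and> v < a + b) \<or> (v < a \<and> a \<le> u \<and> u < a + b))"

definition mono_induced_copy ::
  "'b graph \<Rightarrow> ('b set \<Rightarrow> bool) \<Rightarrow> bool \<Rightarrow> 'a graph \<Rightarrow> bool" where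
  "mono_induced_copy F col c H \<longleftrightarrow>
     (\<exists>f. inj_on f (fst H) \<and> f ` (fst H) \<subseteq> fst F \<and>
        (\<forall>x\<in>fst H. \<forall>y\<in>fst H. snd H x y \<longleftrightarrow> snd F (f x) (f y)) \<and>
        (\<forall>x\<in>fst H. \<forall>y\<in>fst H. snd H x y \<longrightarrow> col {f x, f y} = c))"

text \<open>F -ind-> (H,G); red = True, blue = False.\<close>
definition ind_arrows :: "'b graph \<Rightarrow> 'a graph \<Rightarrow> 'c graph \<Rightarrow> bool" where
  "ind_arrows F H G \<longleftrightarrow>
     (\<forall>col. mono_induced_copy F col True H \<or> mono_induced_copy F col False G)"

text \<open>Induced Ramsey number: least number of vertices of a (simple) graph F with F -ind-> (H,G);
  every finite graph is isomorphic to one on {0..<N}.\<close>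
definition IR :: "'a graph \<Rightarrow> 'c graph \<Rightarrow> nat" where
  "IR H G = (LEAST N. \<exists>E. simple_graph ({0..<N::nat}, E) \<and> ind_arrows ({0..<N}, E) H G)"

end

theory Submission
  imports Defs
begin

text \<open>
  The host graph is the complete bipartite graph K(k,m): any a vertices of its left part
  together with any b vertices of its right part induce a copy of K(a,b). If some left
  vertex has n blue edges, they form a blue induced star K(1,n). Otherwise every left vertex
  has at least m - n + 1 >= r + t red edges. Choosing t right vertices one at a time, each
  with the largest red degree into the left vertices joined in red to all earlier choices,
  keeps at least k (r/m)^t left vertices, hence at least t of them when k = t q^t and
  m <= q r: a red induced K(t,t). Taking q ~ n^(1/(2t)) and r ~ 2n/q gives a host on
  n + O(n/q + q^t) = n + O(n^(1 - 1/(2t))) vertices.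
\<close>

lemma sum_card_filter_swap:
  assumes "finite X" "finite Y"
  shows "(\<Sum>x\<in>X. card {y\<in>Y. R x y}) = (\<Sum>y\<in>Y. card {x\<in>X. R x y})"
proof -
  have card_filter: "card {z\<in>Z. P z} = (\<Sum>z\<in>Z. if P z then 1 else 0)"
    if "finite Z" for Z and P :: "_ \<Rightarrow> bool"
    using sum.inter_filter[OF that, of "\<lambda>_. 1::nat" P] by simp
  show ?thesis using assms by (simp only: card_filter) (rule sum.swap)
qed

lemma ex_vertex_with_large_codegree:
  assumes "finite A" "finite B" "A \<noteq> {}" and deg: "\<forall>b\<in>B. r \<le> card {a\<in>A. R b a}"
  shows "\<exists>a\<in>A. card B * r \<le> card A * card {b\<in>B. R b a}"
proof (rule ccontr)
  assume "\<not> ?thesis"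
  then have "(\<Sum>a\<in>A. card A * card {b\<in>B. R b a}) < (\<Sum>a\<in>A. card B * r)"
    using assms(1,3) by (intro sum_strict_mono) auto
  also have "\<dots> = card A * (\<Sum>b\<in>B. r)" by simp
  also have "\<dots> \<le> card A * (\<Sum>b\<in>B. card {a\<in>A. R b a})"
    using deg by (intro mult_left_mono sum_mono) auto
  also have "\<dots> = (\<Sum>a\<in>A. card A * card {b\<in>B. R b a})"
    using sum_card_filter_swap[OF assms(2,1)] by (simp add: sum_distrib_left)
  finally show False by simp
qed

lemma ex_subset_with_many_common_neighbours:
  assumes A: "finite A" and B: "finite B" "B \<noteq> {}"
    and deg: "\<forall>b\<in>B. r + i \<le> card {a\<in>A. R b a}"
  shows "\<exists>B' P. B' \<subseteq> B \<and> P \<subseteq> A \<and> card P = i \<and> (\<forall>b\<in>B'. \<forall>a\<in>P. R b a) \<and>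
           card B * r ^ i \<le> card B' * card A ^ i"
  using deg
proof (induction i)
  case 0
  show ?case by (intro exI[of _ B] exI[of _ "{}"]) auto
next
  case (Suc i)
  then obtain B' P where B': "B' \<subseteq> B" "P \<subseteq> A" "card P = i" "\<forall>b\<in>B'. \<forall>a\<in>P. R b a"
    and count: "card B * r ^ i \<le> card B' * card A ^ i"
    by fastforce
  have fin: "finite B'" "finite P" using B(1) A B'(1,2) by (auto intro: finite_subset)
  have deg': "\<forall>b\<in>B'. r \<le> card {a\<in>A - P. R b a}"
  proof
    fix b assume "b \<in> B'"
    then have "r + Suc i \<le> card {a\<in>A. R b a}" using Suc.prems B'(1) by blast
    also have "\<dots> \<le> card ({a\<in>A - P. R b a} \<union> P)" using A fin by (intro card_mono) auto
    also have "\<dots> \<le> card {a\<in>A - P. R b a} + i" using card_Un_le B'(3) by metis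
    finally show "r \<le> card {a\<in>A - P. R b a}" by simp
  qed
  have "A - P \<noteq> {}"
  proof
    assume "A - P = {}"
    obtain b where "b \<in> B" using B(2) by blast
    then have "r + Suc i \<le> card {a\<in>A. R b a}" using Suc.prems by blast
    also have "\<dots> \<le> card P" using \<open>A - P = {}\<close> fin(2) by (intro card_mono) auto
    finally show False using B'(3) by simp
  qed
  then obtain a0 where a0: "a0 \<in> A - P" "card B' * r \<le> card (A - P) * card {b\<in>B'. R b a0}"
    using ex_vertex_with_large_codegree[OF _ fin(1) _ deg'] A by blast
  have "card B * r ^ Suc i \<le> (card B' * r) * card A ^ i"
    using count by (simp add: mult_right_mono)
  also have "\<dots> \<le> card (A - P) * card {b\<in>B'. R b a0} * card A ^ i" using a0(2) by simp
  also have "\<dots> \<le> card {b\<in>B'. R b a0} * card A ^ Suc i" using A by (simp add: card_mono)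
  finally have "card B * r ^ Suc i \<le> card {b\<in>B'. R b a0} * card A ^ Suc i" .
  moreover have "card (insert a0 P) = Suc i" using a0(1) fin(2) B'(3) by simp
  ultimately show ?case
    using B'(1,2,4) a0(1) by (intro exI[of _ "{b\<in>B'. R b a0}"] exI[of _ "insert a0 P"]) auto
qed

lemma fst_Kbip [simp]: "fst (Kbip a b) = {0..<a+b}"
  by (simp add: Kbip_def)

lemma snd_Kbip_iff:
  assumes "u < a + b" "v < a + b"
  shows "snd (Kbip a b) u v \<longleftrightarrow> (u < a \<longleftrightarrow> \<not> v < a)"
  using assms by (auto simp: Kbip_def)

lemma simple_graph_Kbip: "simple_graph (Kbip a b)"
  by (auto simp: simple_graph_def Kbip_def)

lemma mono_induced_copy_Kbip:
  assumes L: "L \<subseteq> {0..<k}" "card L = a" and R: "R \<subseteq> {k..<k+m}" "card R = b"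
    and mono: "\<forall>l\<in>L. \<forall>r\<in>R. col {l, r} = c"
  shows "mono_induced_copy (Kbip k m) col c (Kbip a b)"
proof -
  have "finite L" "finite R" using L(1) R(1) finite_subset by auto
  then obtain hL hR where hL: "bij_betw hL {0..<a} L" and hR: "bij_betw hR {a..<a+b} R"
    using finite_same_card_bij L(2) R(2)
    by (metis card_atLeastLessThan diff_zero finite_atLeastLessThan add_diff_cancel_left')
  have Lk: "l < k" if "l \<in> L" for l using that L(1) by auto
  have Rk: "k \<le> r \<and> r < k + m" if "r \<in> R" for r using that R(1) by auto
  define f where "f x = (if x < a then hL x else hR x)" for x
  have fL: "bij_betw f {0..<a} L" and fR: "bij_betw f {a..<a+b} R"
    using hL hR by (auto simp: f_def intro: bij_betw_cong[THEN iffD1])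
  moreover have "L \<inter> R = {}" using Lk Rk by (meson disjoint_iff not_le)
  ultimately have "bij_betw f ({0..<a} \<union> {a..<a+b}) (L \<union> R)" by (rule bij_betw_combine)
  hence f: "bij_betw f {0..<a+b} (L \<union> R)" by (simp add: ivl_disj_un_two)
  have side: "f x < k \<longleftrightarrow> x < a" if "x < a + b" for x
    using that Lk Rk bij_betwE[OF hL] bij_betwE[OF hR] by (auto simp: f_def not_less)
  have range: "f x < k + m" if "x < a + b" for x
    using that Lk Rk bij_betwE[OF f]
    by (metis UnE atLeastLessThan_iff le0 less_imp_add_positive trans_less_add1)
  show ?thesis
    unfolding mono_induced_copy_def
  proof (intro exI[of _ f] conjI ballI)
    show "inj_on f (fst (Kbip a b))" using f by (simp add: bij_betw_def)
    show "f ` fst (Kbip a b) \<subseteq> fst (Kbip k m)" using range by auto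
  next
    fix x y assume "x \<in> fst (Kbip a b)" "y \<in> fst (Kbip a b)"
    then show "snd (Kbip a b) x y \<longleftrightarrow> snd (Kbip k m) (f x) (f y)"
      using side range by (simp add: snd_Kbip_iff)
    show "snd (Kbip a b) x y \<longrightarrow> col {f x, f y} = c"
    proof
      assume "snd (Kbip a b) x y"
      then have "f x \<in> L \<and> f y \<in> R \<or> f y \<in> L \<and> f x \<in> R"
        using bij_betwE[OF fL] bij_betwE[OF fR] by (auto simp: Kbip_def)
      then show "col {f x, f y} = c" using mono by (metis insert_commute)
    qed
  qed
qed

lemma Kbip_ind_arrows_Kbip_star:
  assumes "0 < k" "0 < r" and m: "n + t + r \<le> m + 1" and count: "t * m ^ t \<le> k * r ^ t"
  shows "ind_arrows (Kbip k m) (Kbip t t) (Kbip 1 n)"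
  unfolding ind_arrows_def
proof
  fix col :: "nat set \<Rightarrow> bool"
  define B where "B = {0..<k}"
  define A where "A = {k..<k+m}"
  show "mono_induced_copy (Kbip k m) col True (Kbip t t) \<or>
        mono_induced_copy (Kbip k m) col False (Kbip 1 n)"
  proof (cases "\<exists>b\<in>B. n \<le> card {a\<in>A. \<not> col {b, a}}")
    case True
    then obtain b S where "b \<in> B" "S \<subseteq> {a\<in>A. \<not> col {b, a}}" "card S = n"
      by (meson obtain_subset_with_card_n)
    then have "mono_induced_copy (Kbip k m) col False (Kbip 1 n)"
      by (intro mono_induced_copy_Kbip[of "{b}" _ _ S]) (auto simp: A_def B_def)
    then show ?thesis ..
  next
    case False
    have "\<forall>b\<in>B. r + t \<le> card {a\<in>A. col {b, a}}"
    proof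
      fix b assume "b \<in> B"
      have "card A = card ({a\<in>A. col {b, a}} \<union> {a\<in>A. \<not> col {b, a}})"
        by (rule arg_cong[where f = card]) auto
      also have "\<dots> = card {a\<in>A. col {b, a}} + card {a\<in>A. \<not> col {b, a}}"
        by (rule card_Un_disjoint) (auto simp: A_def)
      finally have "m = card {a\<in>A. col {b, a}} + card {a\<in>A. \<not> col {b, a}}"
        by (simp add: A_def)
      moreover have "card {a\<in>A. \<not> col {b, a}} < n" using False \<open>b \<in> B\<close> by (auto simp: not_le)
      ultimately show "r + t \<le> card {a\<in>A. col {b, a}}" using m by linarith
    qed
    then have "\<exists>B' P. B' \<subseteq> B \<and> P \<subseteq> A \<and> card P = t \<and> (\<forall>b\<in>B'. \<forall>a\<in>P. col {b, a}) \<and>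
                 card B * r ^ t \<le> card B' * card A ^ t"
      using \<open>0 < k\<close> by (intro ex_subset_with_many_common_neighbours) (auto simp: A_def B_def)
    then obtain B' P where B': "B' \<subseteq> B" "P \<subseteq> A" "card P = t" "\<forall>b\<in>B'. \<forall>a\<in>P. col {b, a}"
      and "card B * r ^ t \<le> card B' * card A ^ t"
      by blast
    moreover have "card B = k" "card A = m" by (simp_all add: A_def B_def)
    ultimately have "t * m ^ t \<le> card B' * m ^ t" using count by (metis le_trans)
    moreover have "0 < m ^ t" using m \<open>0 < r\<close> by (cases t) simp_all
    ultimately obtain T where "T \<subseteq> B'" "card T = t"
      by (meson obtain_subset_with_card_n mult_le_cancel2 zero_less_iff_neq_zero)
    then have "mono_induced_copy (Kbip k m) col True (Kbip t t)"
      using B' by (intro mono_induced_copy_Kbip[of T _ _ P]) (auto simp: A_def B_def)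
    then show ?thesis ..
  qed
qed

lemma IR_le_of_ind_arrows_Kbip:
  assumes "ind_arrows (Kbip k m) H G"
  shows "IR H G \<le> k + m"
  unfolding IR_def
proof (rule Least_le)
  show "\<exists>E. simple_graph ({0..<k+m}, E) \<and> ind_arrows ({0..<k+m}, E) H G"
    using simple_graph_Kbip assms by (intro exI[of _ "snd (Kbip k m)"]) (simp add: Kbip_def)
qed

lemma IR_Kbip_Kbip_star_le:
  assumes "1 \<le> t" "2 \<le> q"
  shows "IR (Kbip t t) (Kbip 1 n) \<le> n + 2 * (n div q) + 2 * t + 1 + t * q ^ t"
proof -
  define d where "d = n div q + 1"
  define r where "r = 2 * d + t"
  define m where "m = n + 2 * d + 2 * t - 1"
  have "n < q * d" using dividend_less_times_div[of q n] assms(2) by (simp add: d_def)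
  moreover have "2 * d \<le> q * d" "2 * t \<le> q * t" using assms(2) by simp_all
  moreover have "q * r = 2 * (q * d) + q * t" by (simp add: r_def algebra_simps)
  ultimately have "m \<le> q * r" unfolding m_def by arith
  then have "t * m ^ t \<le> t * q ^ t * r ^ t" by (simp add: power_mono flip: power_mult_distrib)
  then have "ind_arrows (Kbip (t * q ^ t) m) (Kbip t t) (Kbip 1 n)"
    using assms by (intro Kbip_ind_arrows_Kbip_star) (simp_all add: r_def m_def d_def)
  then have "IR (Kbip t t) (Kbip 1 n) \<le> t * q ^ t + m" by (rule IR_le_of_ind_arrows_Kbip)
  then show ?thesis by (simp add: m_def d_def)
qed

lemma nat_ceiling_root_bounds:
  fixes n t :: nat
  assumes t: "1 \<le> t" and n: "4 ^ t \<le> n"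
  defines "q \<equiv> nat \<lceil>real n powr (1 / (2 * real t))\<rceil>"
  shows "2 \<le> q" "real (n div q) \<le> real n powr (1 - 1 / (2 * real t))"
    "real q ^ t \<le> 2 ^ t * sqrt (real n)"
proof -
  define x where "x = real n powr (1 / (2 * real t))"
  have "(2::real) = (2 powr (2 * real t)) powr (1 / (2 * real t))"
    using t by (simp add: powr_powr)
  also have "\<dots> \<le> x"
  proof -
    have "(2::real) powr (2 * real t) = 4 ^ t"
      by (simp add: powr_realpow flip: powr_powr power_mult)
    moreover have "(4::real) ^ t \<le> real n" using n by (metis of_nat_le_iff of_nat_numeral of_nat_power)
    ultimately show ?thesis unfolding x_def by (intro powr_mono2) simp_all
  qed
  finally have x2: "2 \<le> x" .
  then have "0 < real n" by (simp add: x_def powr_def split: if_splits)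
  have qx: "x \<le> real q" "real q \<le> 2 * x" unfolding q_def x_def[symmetric] using x2 by linarith+
  then show "2 \<le> q" using x2 by linarith
  have "real (n div q) \<le> real n / real q" by (rule of_nat_div_le_of_nat)
  also have "\<dots> \<le> real n / x" using qx x2 by (intro divide_left_mono) auto
  also have "\<dots> = real n powr (1 - 1 / (2 * real t))"
    using n by (simp add: x_def powr_diff)
  finally show "real (n div q) \<le> real n powr (1 - 1 / (2 * real t))" .
  have "real q ^ t \<le> (2 * x) ^ t" using qx x2 by (intro power_mono) auto
  also have "\<dots> = 2 ^ t * real n powr (real t * (1 / (2 * real t)))"
    using \<open>0 < real n\<close> by (simp add: x_def power_mult_distrib powr_power)
  also have "\<dots> = 2 ^ t * sqrt (real n)" using t by (simp add: powr_half_sqrt)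
  finally show "real q ^ t \<le> 2 ^ t * sqrt (real n)" .
qed

theorem lemma4:
  fixes t :: nat
  assumes "t \<ge> 2"
  shows "\<exists>c::real. c > 0 \<and> (\<exists>n0::nat. \<forall>n::nat. n > n0 \<longrightarrow>
           real (IR (Kbip t t) (Kbip 1 n)) \<le> real n + c * real n powr (1 - 1 / (2 * real t)))"
proof (intro exI[of _ "2 * real t + 3 + real t * 2 ^ t"] conjI exI[of _ "4 ^ t"] allI impI)
  show "0 < 2 * real t + 3 + real t * 2 ^ t" by (simp add: add_pos_nonneg)
  fix n :: nat assume "4 ^ t < n"
  define q where "q = nat \<lceil>real n powr (1 / (2 * real t))\<rceil>"
  define N where "N = real n powr (1 - 1 / (2 * real t))"
  have t: "1 \<le> t" using assms by simp
  note q_bounds = nat_ceiling_root_bounds[OF t less_imp_le[OF \<open>4 ^ t < n\<close>], folded q_def N_def]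
  have "1 \<le> real n" using \<open>4 ^ t < n\<close> by simp
  then have N: "1 \<le> N" "sqrt (real n) \<le> N"
    using t by (auto simp: N_def field_simps ge_one_powr_ge_zero simp flip: powr_half_sqrt intro!: powr_mono)
  have "real q ^ t \<le> 2 ^ t * N"
    using q_bounds(3) N(2) by (meson order_trans mult_left_mono zero_le_numeral zero_le_power)
  have "real (IR (Kbip t t) (Kbip 1 n)) \<le> real (n + 2 * (n div q) + 2 * t + 1 + t * q ^ t)"
    using IR_Kbip_Kbip_star_le[OF t q_bounds(1)] of_nat_le_iff by blast
  also have "\<dots> = real n + 2 * real (n div q) + (2 * real t + 1) + real t * real q ^ t" by simp
  also have "\<dots> \<le> real n + 2 * N + (2 * real t + 1) * N + real t * (2 ^ t * N)"
    using q_bounds(2) N(1) \<open>real q ^ t \<le> 2 ^ t * N\<close> by (intro add_mono mult_left_mono order.refl) auto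
  also have "\<dots> = real n + (2 * real t + 3 + real t * 2 ^ t) * N" by (simp add: algebra_simps)
  finally show "real (IR (Kbip t t) (Kbip 1 n)) \<le>
      real n + (2 * real t + 3 + real t * 2 ^ t) * real n powr (1 - 1 / (2 * real t))"
    unfolding N_def .
qed

end
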